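(* Let $Y$ be a Young diagram with row lengths $a_1\ge\cdots\ge a_m\ge0$ and let $Q\subseteq C\times S$. Then there exists a 2-cover $P$ of $H(Y)$ with $P\cap(C\times S)=Q$ and $$\tau^{(2)}(H(Y))\le |P|=|Q|+\sum_{i=1}^m \nu(a_i,Q).$$
   Context: $H(Y)$ is the hypergraph with vertex sides $R=\{r_1,\dots,r_m\}$, $C=\{c_1,\dots,c_{a_1}\}$, $S=\{s_1,\dots,s_{a_1}\}$ and edges $\{r_i,c_j,s_k\}$ for $1\le i\le m$, $1\le j,k\le a_i$. For disjoint sets $A,B$, $A\times B$ denotes the set of pairs $\{a,b\}$, $a\in A$, $b\in B$. A 2-cover of $H(Y)$ is a set of pairs of vertices such that every edge contains some pair of the set; $\tau^{(2)}(H(Y))$ is the minimum size of a 2-cover. $\nu(\ell,Q)$ is the matching number of the bipartite graph with sides $\{c_1,\dots,c_\ell\}$, $\{s_1,\dots,s_\ell\}$ and edges $\{c_js_k:1\le j,k\le\ell\}\setminus Q$. *)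

theory Defs
  imports Main
begin

text \<open>Vertices of H(Y): r_i, c_j, s_k (indices start at 1).\<close>
datatype vtx = Rv nat | Cv nat | Sv nat

definition Rset :: "nat \<Rightarrow> vtx set" where "Rset n = Rv ` {1..n}"
definition Cset :: "nat \<Rightarrow> vtx set" where "Cset n = Cv ` {1..n}"
definition Sset :: "nat \<Rightarrow> vtx set" where "Sset n = Sv ` {1..n}"

text \<open>A \<times> B for disjoint vertex sets: the set of unordered pairs {a,b}.\<close>
definition pairs :: "vtx set \<Rightarrow> vtx set \<Rightarrow> vtx set set" where
  "pairs A B = {{x, y} | x y. x \<in> A \<and> y \<in> B}"

definition first_row :: "nat \<Rightarrow> (nat \<Rightarrow> nat) \<Rightarrow> nat" where
  "first_row m a = (if m = 0 then 0 else a 1)"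

definition HY_vertices :: "nat \<Rightarrow> (nat \<Rightarrow> nat) \<Rightarrow> vtx set" where
  "HY_vertices m a = Rset m \<union> Cset (first_row m a) \<union> Sset (first_row m a)"

definition HY_edges :: "nat \<Rightarrow> (nat \<Rightarrow> nat) \<Rightarrow> vtx set set" where
  "HY_edges m a = {{Rv i, Cv j, Sv k} | i j k.
      1 \<le> i \<and> i \<le> m \<and> 1 \<le> j \<and> j \<le> a i \<and> 1 \<le> k \<and> k \<le> a i}"

definition is_2cover :: "'v set \<Rightarrow> 'v set set \<Rightarrow> 'v set set \<Rightarrow> bool" where
  "is_2cover V E P \<longleftrightarrow> (\<forall>p\<in>P. p \<subseteq> V \<and> card p = 2) \<and> (\<forall>e\<in>E. \<exists>p\<in>P. p \<subseteq> e)"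

definition tau2 :: "'v set \<Rightarrow> 'v set set \<Rightarrow> nat" where
  "tau2 V E = Min {card P | P. is_2cover V E P}"

definition nu :: "nat \<Rightarrow> vtx set set \<Rightarrow> nat" where
  "nu l Q = Max {card M | M. M \<subseteq> pairs (Cset l) (Sset l) - Q \<and> pairwise disjnt M}"

end

(*
  For every row i choose a minimum vertex cover V_i of the bipartite graph on
  c_1..c_(a_i), s_1..s_(a_i) whose edges are the pairs outside Q; by Koenig's theorem
  |V_i| = nu(a_i, Q). Then P = Q together with all {r_i} \<times> V_i is a 2-cover: an edge
  {r_i, c_j, s_k} contains {c_j, s_k} if this pair lies in Q, and otherwise c_j or s_k
  lies in V_i, so {r_i, c_j} or {r_i, s_k} is in P. No pair containing some r_i lies in
  C \<times> S, so P meets C \<times> S exactly in Q and the pieces of P are pairwise disjoint.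
  Koenig's theorem follows from Hall's theorem after giving all vertices d common extra
  neighbours, d being the maximal deficiency |S| - |N(S)|.
*)
theory Submission
  imports Defs
begin

lemma hall_condition_Diff_tight:
  fixes N :: "'a \<Rightarrow> 'b set"
  assumes hall: "\<forall>S\<subseteq>A. card S \<le> card (\<Union>(N ` S))" and "finite A"
    and T: "T \<subseteq> A" "card (\<Union>(N ` T)) \<le> card T"
  shows "\<forall>S\<subseteq>A - T. card S \<le> card (\<Union>((\<lambda>x. N x - \<Union>(N ` T)) ` S))"
proof (intro allI impI)
  fix S assume S: "S \<subseteq> A - T"
  let ?NT = "\<Union>(N ` T)" and ?NS = "\<Union>((\<lambda>x. N x - \<Union>(N ` T)) ` S)"
  have "finite S" "finite T" using S T \<open>finite A\<close> finite_subset by blast+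
  then have "card S + card T = card (S \<union> T)" by (rule card_Un_disjoint[symmetric]) (use S in auto)
  also have "\<dots> \<le> card (\<Union>(N ` (S \<union> T)))" using hall S T by (metis Diff_subset le_sup_iff subset_trans)
  also have "\<Union>(N ` (S \<union> T)) = ?NS \<union> ?NT" by auto
  also have "card (?NS \<union> ?NT) \<le> card ?NS + card ?NT" by (rule card_Un_le)
  finally show "card S \<le> card ?NS" using T(2) by linarith
qed

lemma hall_condition_Diff_singleton:
  fixes N :: "'a \<Rightarrow> 'b set"
  assumes surplus: "\<forall>S\<subseteq>A. S \<noteq> {} \<longrightarrow> card S < card (\<Union>(N ` S))"
  shows "\<forall>S\<subseteq>A. card S \<le> card (\<Union>((\<lambda>x. N x - {b}) ` S))"
proof (intro allI impI)
  fix S assume S: "S \<subseteq> A"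
  have eq: "\<Union>((\<lambda>x. N x - {b}) ` S) = \<Union>(N ` S) - {b}" by auto
  show "card S \<le> card (\<Union>((\<lambda>x. N x - {b}) ` S))"
  proof (cases "S = {}")
    case False
    then have "card S < card (\<Union>(N ` S))" using surplus S by blast
    then show ?thesis unfolding eq by (auto simp: card_Diff_singleton_if)
  qed simp
qed

(* Halmos-Vaughan: split A at a tight proper subset T, matching T into N(T) and A - T
   outside N(T); if there is none, match any a to any neighbour and recurse. *)
theorem hall_marriage:
  fixes A :: "'a set" and N :: "'a \<Rightarrow> 'b set"
  assumes "finite A" "\<forall>a\<in>A. finite (N a)" "\<forall>S\<subseteq>A. card S \<le> card (\<Union>(N ` S))"
  shows "\<exists>f. inj_on f A \<and> (\<forall>a\<in>A. f a \<in> N a)"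
  using assms
proof (induction "card A" arbitrary: A N rule: less_induct)
  case less
  note IH = less.hyps and fin = less.prems(1,2) and hall = less.prems(3)
  show ?case
  proof (cases "\<exists>T\<subseteq>A. T \<noteq> {} \<and> T \<noteq> A \<and> card (\<Union>(N ` T)) \<le> card T")
    case True
    then obtain T where T: "T \<subseteq> A" "T \<noteq> {}" "T \<noteq> A" "card (\<Union>(N ` T)) \<le> card T" by blast
    let ?NT = "\<Union>(N ` T)"
    have "card T < card A" using T fin psubset_card_mono by blast
    then obtain g where g: "inj_on g T" "\<forall>x\<in>T. g x \<in> N x"
      using IH[of T N] T(1) fin hall finite_subset by (metis subset_iff subset_trans)
    have "card (A - T) < card A" using T fin by (intro psubset_card_mono) auto
    then obtain h where h: "inj_on h (A - T)" "\<forall>x\<in>A - T. h x \<in> N x - ?NT"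
      using IH[of "A - T" "\<lambda>x. N x - ?NT"] hall_condition_Diff_tight[OF hall fin(1) T(1,4)] fin
      by auto
    have "g ` T \<subseteq> ?NT" "h ` (A - T) \<inter> ?NT = {}" using g(2) h(2) by auto
    then have "g ` T \<inter> h ` (A - T) = {}" by blast
    then have "inj_on (\<lambda>x. if x \<in> T then g x else h x) A"
      using inj_on_disjoint_Un[OF g(1) h(1)] T(1) by (simp add: Un_absorb1)
    then show ?thesis using g(2) h(2) by (intro exI[of _ "\<lambda>x. if x \<in> T then g x else h x"]) auto
  next
    case no_tight: False
    show ?thesis
    proof (cases "A = {}")
      case False
      then obtain a where a: "a \<in> A" by blast
      then have "card {a} \<le> card (\<Union>(N ` {a}))" using hall by blast
      then obtain b where b: "b \<in> N a" by fastforce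
      have "\<forall>S\<subseteq>A - {a}. S \<noteq> {} \<longrightarrow> card S < card (\<Union>(N ` S))"
        using no_tight a by (auto simp: not_le)
      then have "\<forall>S\<subseteq>A - {a}. card S \<le> card (\<Union>((\<lambda>x. N x - {b}) ` S))"
        by (rule hall_condition_Diff_singleton)
      moreover have "card (A - {a}) < card A" using fin(1) a by (rule card_Diff1_less)
      ultimately obtain g where g: "inj_on g (A - {a})" "\<forall>x\<in>A - {a}. g x \<in> N x - {b}"
        using IH[of "A - {a}" "\<lambda>x. N x - {b}"] fin by auto
      have "inj_on (g(a := b)) (insert a (A - {a}))" using g by (auto simp: inj_on_def)
      moreover have "insert a (A - {a}) = A" using a by blast
      ultimately show ?thesis using g(2) b by (metis fun_upd_apply DiffD1 insert_Diff_single insert_iff)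
    qed simp
  qed
qed

lemma hall_deficiency:
  fixes A :: "'a set" and N :: "'a \<Rightarrow> 'b set"
  assumes fin: "finite A" "\<forall>a\<in>A. finite (N a)"
    and hall: "\<forall>S\<subseteq>A. card S \<le> card (\<Union>(N ` S)) + d"
  obtains A' f where "A' \<subseteq> A" "inj_on f A'" "\<forall>a\<in>A'. f a \<in> N a" "card A \<le> card A' + d"
proof -
  define N' :: "'a \<Rightarrow> ('b + nat) set" where "N' a = Inl ` N a \<union> Inr ` {..<d}" for a
  have "\<forall>S\<subseteq>A. card S \<le> card (\<Union>(N' ` S))"
  proof (intro allI impI)
    fix S assume S: "S \<subseteq> A"
    show "card S \<le> card (\<Union>(N' ` S))"
    proof (cases "S = {}")
      case False
      have "finite (\<Union>(N ` S))" using S fin finite_subset by blast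
      moreover have "\<Union>(N' ` S) = Inl ` \<Union>(N ` S) \<union> Inr ` {..<d}"
        using False by (auto simp: N'_def)
      ultimately have "card (\<Union>(N' ` S)) = card (\<Union>(N ` S)) + d"
        by (simp only:) (subst card_Un_disjoint, auto simp: card_image)
      then show ?thesis using hall S by simp
    qed simp
  qed
  then obtain f where f: "inj_on f A" "\<forall>a\<in>A. f a \<in> N' a"
    using hall_marriage[of A N'] fin by (auto simp: N'_def)
  define A' where "A' = {a\<in>A. isl (f a)}"
  have "inj_on (projl \<circ> f) A'"
    using f(1) by (auto simp: A'_def inj_on_def isl_def)
  moreover have "\<forall>a\<in>A'. (projl \<circ> f) a \<in> N a"
    using f(2) by (auto simp: A'_def N'_def)
  moreover have "A' \<subseteq> A" by (simp add: A'_def)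
  moreover have "card (A - A') \<le> d"
  proof -
    have "f ` (A - A') \<subseteq> Inr ` {..<d}" using f(2) by (auto simp: A'_def N'_def)
    moreover have "inj_on f (A - A')" using f(1) by (rule inj_on_subset) blast
    ultimately have "card (A - A') \<le> card (Inr ` {..<d} :: ('b + nat) set)"
      by (intro card_inj_on_le) auto
    then show ?thesis by (simp add: card_image)
  qed
  moreover have "card A \<le> card A' + card (A - A')"
    using card_Un_le[of A' "A - A'"] \<open>A' \<subseteq> A\<close> by (simp add: Un_absorb1)
  ultimately show ?thesis using that by force
qed

(* For S0 minimising |A - S| + |N(S)|, the vertices A - S0 and N(S0) cover all edges,
   and the minimum k turns the deficiency bound |A| - k into a matching of size k. *)
lemma konig_cover_le_matching:
  fixes A :: "'a set" and N :: "'a \<Rightarrow> 'b set"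
  assumes fin: "finite A" "\<forall>a\<in>A. finite (N a)"
  obtains A' f X Y where "A' \<subseteq> A" "inj_on f A'" "\<forall>a\<in>A'. f a \<in> N a"
    and "X \<subseteq> A" "Y \<subseteq> \<Union>(N ` A)" "\<forall>a\<in>A - X. N a \<subseteq> Y" "card X + card Y \<le> card A'"
proof -
  obtain S0 where S0: "S0 \<subseteq> A" and min: "\<And>S. S \<subseteq> A \<Longrightarrow>
      card (A - S0) + card (\<Union>(N ` S0)) \<le> card (A - S) + card (\<Union>(N ` S))"
    using ex_has_least_nat[of "\<lambda>S. S \<subseteq> A" "{}" "\<lambda>S. card (A - S) + card (\<Union>(N ` S))"]
    by blast
  define k where "k = card (A - S0) + card (\<Union>(N ` S0))"
  have "k \<le> card A" using min[of "{}"] by (simp add: k_def)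
  have surplus: "\<forall>S\<subseteq>A. card S \<le> card (\<Union>(N ` S)) + (card A - k)"
  proof (intro allI impI)
    fix S assume S: "S \<subseteq> A"
    have "finite S" using S fin(1) by (rule finite_subset)
    then have "card (A - S) = card A - card S" "card S \<le> card A"
      using S fin(1) by (simp_all add: card_Diff_subset card_mono)
    then show "card S \<le> card (\<Union>(N ` S)) + (card A - k)"
      using min[OF S] \<open>k \<le> card A\<close> unfolding k_def by linarith
  qed
  obtain A' f where A': "A' \<subseteq> A" "inj_on f A'" "\<forall>a\<in>A'. f a \<in> N a"
    and "card A \<le> card A' + (card A - k)"
    by (rule hall_deficiency[OF fin surplus])
  then have "k \<le> card A'" using \<open>k \<le> card A\<close> by linarith
  moreover have "\<forall>a\<in>A - (A - S0). N a \<subseteq> \<Union>(N ` S0)" by blast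
  moreover have "\<Union>(N ` S0) \<subseteq> \<Union>(N ` A)" using S0 by blast
  ultimately show ?thesis
    using that[OF A', of "A - S0" "\<Union>(N ` S0)"] unfolding k_def by blast
qed

lemma finite_pairs: "finite A \<Longrightarrow> finite B \<Longrightarrow> finite (pairs A B)"
proof -
  assume "finite A" "finite B"
  moreover have "pairs A B = (\<lambda>(x, y). {x, y}) ` (A \<times> B)" unfolding pairs_def by auto
  ultimately show ?thesis by simp
qed

lemma pairs_Cset_Sset_iff: "p \<in> pairs (Cset n) (Sset n) \<longleftrightarrow> (\<exists>j\<in>{1..n}. \<exists>k\<in>{1..n}. p = {Cv j, Sv k})"
  unfolding pairs_def Cset_def Sset_def by blast

lemma Cv_Sv_in_pairs: "j \<in> {1..n} \<Longrightarrow> k \<in> {1..n} \<Longrightarrow> {Cv j, Sv k} \<in> pairs (Cset n) (Sset n)"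
  unfolding pairs_Cset_Sset_iff by blast

lemma card_pairwise_disjnt_le_hitting_set:
  assumes "pairwise disjnt M" "finite V" "\<forall>e\<in>M. e \<inter> V \<noteq> {}"
  shows "card M \<le> card V"
proof -
  have "\<forall>e\<in>M. \<exists>x. x \<in> e \<inter> V" using assms(3) by blast
  then obtain g where g: "\<forall>e\<in>M. g e \<in> e \<inter> V" by metis
  have "inj_on g M"
  proof (rule inj_onI)
    fix e e' assume e: "e \<in> M" "e' \<in> M" "g e = g e'"
    then have "g e \<in> e \<inter> e'" using g by (metis IntD1 IntI)
    then show "e = e'" using assms(1) e(1,2) unfolding pairwise_def disjnt_def by blast
  qed
  moreover have "g ` M \<subseteq> V" using g by blast
  ultimately show ?thesis using assms(2) by (rule card_inj_on_le)
qed

definition vertex_cover :: "nat \<Rightarrow> vtx set set \<Rightarrow> vtx set \<Rightarrow> bool" where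
  "vertex_cover l Q V \<longleftrightarrow>
     (\<forall>j\<in>{1..l}. \<forall>k\<in>{1..l}. {Cv j, Sv k} \<notin> Q \<longrightarrow> Cv j \<in> V \<or> Sv k \<in> V)"

lemma finite_matching_sizes:
  "finite {card M | M. M \<subseteq> pairs (Cset l) (Sset l) - Q \<and> pairwise disjnt M}"
proof -
  have fin: "finite (pairs (Cset l) (Sset l))" by (simp add: finite_pairs Cset_def Sset_def)
  have "{card M | M. M \<subseteq> pairs (Cset l) (Sset l) - Q \<and> pairwise disjnt M}
      \<subseteq> card ` Pow (pairs (Cset l) (Sset l))"
    by (auto simp: image_iff)
  then show ?thesis using fin by (simp add: finite_subset)
qed

lemma card_matching_le_nu:
  assumes "M \<subseteq> pairs (Cset l) (Sset l) - Q" "pairwise disjnt M"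
  shows "card M \<le> nu l Q"
proof -
  have "card M \<in> {card M | M. M \<subseteq> pairs (Cset l) (Sset l) - Q \<and> pairwise disjnt M}"
    using assms by blast
  then show ?thesis unfolding nu_def by (rule Max_ge[OF finite_matching_sizes])
qed

lemma nu_attained:
  obtains M where "M \<subseteq> pairs (Cset l) (Sset l) - Q" "pairwise disjnt M" "card M = nu l Q"
proof -
  have "card {} \<in> {card M | M. M \<subseteq> pairs (Cset l) (Sset l) - Q \<and> pairwise disjnt M}"
    unfolding mem_Collect_eq by (intro exI[of _ "{}"]) simp
  then have "nu l Q \<in> {card M | M. M \<subseteq> pairs (Cset l) (Sset l) - Q \<and> pairwise disjnt M}"
    unfolding nu_def by (intro Max_in[OF finite_matching_sizes[of l Q]]) blast
  then show ?thesis using that unfolding mem_Collect_eq by metis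
qed

lemma nu_le_card_vertex_cover:
  assumes "finite V" "vertex_cover l Q V"
  shows "nu l Q \<le> card V"
proof -
  obtain M where M: "M \<subseteq> pairs (Cset l) (Sset l) - Q" "pairwise disjnt M" "card M = nu l Q"
    by (rule nu_attained)
  have "e \<inter> V \<noteq> {}" if "e \<in> M" for e
  proof -
    obtain j k where "j \<in> {1..l}" "k \<in> {1..l}" "e = {Cv j, Sv k}" "e \<notin> Q"
      using M(1) \<open>e \<in> M\<close> pairs_Cset_Sset_iff by blast
    then show ?thesis using assms(2) unfolding vertex_cover_def by blast
  qed
  then show ?thesis using card_pairwise_disjnt_le_hitting_set[OF M(2) assms(1)] M(3) by auto
qed

lemma card_injection_le_nu:
  assumes "A \<subseteq> {1..l}" "inj_on f A" "\<forall>j\<in>A. f j \<in> {1..l} \<and> {Cv j, Sv (f j)} \<notin> Q"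
  shows "card A \<le> nu l Q"
proof -
  define M where "M = (\<lambda>j. {Cv j, Sv (f j)}) ` A"
  have "M \<subseteq> pairs (Cset l) (Sset l) - Q"
    using assms(1,3) unfolding M_def by (auto intro!: Cv_Sv_in_pairs)
  moreover have "pairwise disjnt M"
    using assms(2) unfolding M_def pairwise_def disjnt_def inj_on_def by auto
  moreover have "inj_on (\<lambda>j. {Cv j, Sv (f j)}) A" by (auto simp: inj_on_def doubleton_eq_iff)
  then have "card M = card A" unfolding M_def by (rule card_image)
  ultimately show ?thesis using card_matching_le_nu by metis
qed

lemma ex_vertex_cover_card_nu: "\<exists>V \<subseteq> Cset l \<union> Sset l. card V = nu l Q \<and> vertex_cover l Q V"
proof -
  define N where "N j = {k\<in>{1..l}. {Cv j, Sv k} \<notin> Q}" for j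
  obtain A' f X Y where A': "A' \<subseteq> {1..l}" "inj_on f A'" "\<forall>j\<in>A'. f j \<in> N j"
    and XY: "X \<subseteq> {1..l}" "Y \<subseteq> \<Union>(N ` {1..l})" "\<forall>j\<in>{1..l} - X. N j \<subseteq> Y"
      "card X + card Y \<le> card A'"
    by (rule konig_cover_le_matching[of "{1..l}" N]) (auto simp: N_def)
  define V where "V = Cv ` X \<union> Sv ` Y"
  have "Y \<subseteq> {1..l}" using XY(2) by (auto simp: N_def)
  then have "finite X" "finite Y" using XY(1) by (meson finite_atLeastAtMost finite_subset)+
  then have "V \<subseteq> Cset l \<union> Sset l" "finite V" using XY(1) \<open>Y \<subseteq> {1..l}\<close>
    by (auto simp: V_def Cset_def Sset_def)
  moreover have "vertex_cover l Q V"
    using XY(3) unfolding vertex_cover_def V_def N_def by blast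
  moreover have "card V = card X + card Y"
    unfolding V_def using \<open>finite X\<close> \<open>finite Y\<close>
    by (subst card_Un_disjoint) (auto simp: card_image inj_on_def)
  moreover have "card A' \<le> nu l Q"
    using A' by (intro card_injection_le_nu) (auto simp: N_def)
  moreover have "nu l Q \<le> card V" using \<open>finite V\<close> \<open>vertex_cover l Q V\<close>
    by (rule nu_le_card_vertex_cover)
  ultimately have "card V = nu l Q" using XY(4) by linarith
  then show ?thesis using \<open>V \<subseteq> Cset l \<union> Sset l\<close> \<open>vertex_cover l Q V\<close> by blast
qed

lemma tau2_le_card:
  assumes "finite V" "is_2cover V E P"
  shows "tau2 V E \<le> card P"
proof -
  have "P' \<subseteq> Pow V" if "is_2cover V E P'" for P' using that unfolding is_2cover_def by blast
  then have "{card P | P. is_2cover V E P} \<subseteq> card ` Pow (Pow V)" by (auto simp: image_iff)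
  then have "finite {card P | P. is_2cover V E P}"
    using assms(1) by (simp add: finite_subset)
  moreover have "card P \<in> {card P | P. is_2cover V E P}" using assms(2) by auto
  ultimately show ?thesis unfolding tau2_def by (rule Min_le)
qed

lemma young_le_first_row:
  assumes young: "\<forall>i. 1 \<le> i \<and> i < m \<longrightarrow> a (Suc i) \<le> a i" and "1 \<le> i" "i \<le> m"
  shows "a i \<le> first_row m a"
  using \<open>1 \<le> i\<close> \<open>i \<le> m\<close>
proof (induction i rule: dec_induct)
  case (step k)
  then have "a (Suc k) \<le> a k" using young by simp
  with step show ?case by simp
qed (auto simp: first_row_def)

definition row_pairs :: "nat \<Rightarrow> vtx set \<Rightarrow> vtx set set" where
  "row_pairs i V = (\<lambda>x. {Rv i, x}) ` V"

lemma card_row_pairs: "Rv i \<notin> V \<Longrightarrow> card (row_pairs i V) = card V"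
  unfolding row_pairs_def by (rule card_image) (auto simp: inj_on_def doubleton_eq_iff)

lemma row_pairs_disjoint:
  assumes "i \<noteq> i'" "Rv i' \<notin> V"
  shows "row_pairs i V \<inter> row_pairs i' V' = {}"
proof -
  have "{Rv i, x} \<noteq> {Rv i', y}" if "x \<in> V" for x y
    using that assms by (auto simp: doubleton_eq_iff)
  then show ?thesis unfolding row_pairs_def by blast
qed

lemma card_Un_row_pairs:
  assumes "finite Q" "\<And>q i. q \<in> Q \<Longrightarrow> Rv i \<notin> q" "finite I"
    and "\<And>i. finite (V i)" "\<And>i i'. Rv i' \<notin> V i"
  shows "card (Q \<union> (\<Union>i\<in>I. row_pairs i (V i))) = card Q + (\<Sum>i\<in>I. card (V i))"
proof -
  have "finite (row_pairs i (V i))" for i using assms(4) by (simp add: row_pairs_def)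
  moreover have "card (\<Union>i\<in>I. row_pairs i (V i)) = (\<Sum>i\<in>I. card (V i))"
    using calculation assms(3,5) by (subst card_UN_disjoint) (auto simp: row_pairs_disjoint card_row_pairs)
  moreover have "Q \<inter> (\<Union>i\<in>I. row_pairs i (V i)) = {}"
    using assms(2) by (auto simp: row_pairs_def)
  ultimately show ?thesis
    using assms(1,3) by (simp add: card_Un_disjoint)
qed

lemma Rv_notin_pairs: "p \<in> pairs (Cset n) (Sset n) \<Longrightarrow> Rv i \<notin> p"
  unfolding pairs_Cset_Sset_iff by auto

lemma is_2cover_HY:
  assumes young: "\<forall>i. 1 \<le> i \<and> i < m \<longrightarrow> a (Suc i) \<le> a i"
    and Q: "Q \<subseteq> pairs (Cset (first_row m a)) (Sset (first_row m a))"
    and V: "\<And>i. V i \<subseteq> Cset (a i) \<union> Sset (a i)" "\<And>i. vertex_cover (a i) Q (V i)"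
  shows "is_2cover (HY_vertices m a) (HY_edges m a) (Q \<union> (\<Union>i\<in>{1..m}. row_pairs i (V i)))"
proof -
  let ?n = "first_row m a" and ?P = "Q \<union> (\<Union>i\<in>{1..m}. row_pairs i (V i))"
  have "p \<subseteq> HY_vertices m a \<and> card p = 2" if "p \<in> ?P" for p
  proof -
    from that consider "p \<in> Q" | i x where "i \<in> {1..m}" "x \<in> V i" "p = {Rv i, x}"
      unfolding row_pairs_def by blast
    then show ?thesis
    proof cases
      case 1
      then obtain j k where "j \<in> {1..?n}" "k \<in> {1..?n}" "p = {Cv j, Sv k}"
        using Q pairs_Cset_Sset_iff by blast
      then show ?thesis by (auto simp: HY_vertices_def Cset_def Sset_def)
    next
      case (2 i x)
      have "a i \<le> ?n" using young_le_first_row[OF young] 2(1) by simp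
      then have "x \<in> Cset ?n \<union> Sset ?n" using V(1)[of i] 2(2) by (auto simp: Cset_def Sset_def)
      then show ?thesis using 2 by (auto simp: HY_vertices_def Rset_def Cset_def Sset_def)
    qed
  qed
  moreover have "\<exists>p\<in>?P. p \<subseteq> e" if edge: "e \<in> HY_edges m a" for e
  proof -
    obtain i j k where e: "e = {Rv i, Cv j, Sv k}" "i \<in> {1..m}" "j \<in> {1..a i}" "k \<in> {1..a i}"
      using edge unfolding HY_edges_def atLeastAtMost_iff by blast
    have in_P: "{Rv i, x} \<in> ?P" if "x \<in> V i" for x
      using that e(2) unfolding row_pairs_def by blast
    consider "{Cv j, Sv k} \<in> Q" | x where "x \<in> V i" "x \<in> {Cv j, Sv k}"
      using V(2)[of i] e(3,4) unfolding vertex_cover_def by blast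
    then show ?thesis
    proof cases
      case 1
      then show ?thesis using e(1) by (intro bexI[of _ "{Cv j, Sv k}"]) auto
    next
      case (2 x)
      then show ?thesis using e(1) by (intro bexI[OF _ in_P]) auto
    qed
  qed
  ultimately show ?thesis unfolding is_2cover_def by blast
qed

theorem corollary1:
  fixes m :: nat and a :: "nat \<Rightarrow> nat" and Q :: "vtx set set"
  assumes young: "\<forall>i. 1 \<le> i \<and> i < m \<longrightarrow> a (Suc i) \<le> a i"
    and Q: "Q \<subseteq> pairs (Cset (first_row m a)) (Sset (first_row m a))"
  shows "\<exists>P. is_2cover (HY_vertices m a) (HY_edges m a) P
           \<and> P \<inter> pairs (Cset (first_row m a)) (Sset (first_row m a)) = Q
           \<and> tau2 (HY_vertices m a) (HY_edges m a) \<le> card P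
           \<and> card P = card Q + (\<Sum>i=1..m. nu (a i) Q)"
proof -
  let ?n = "first_row m a"
  have "\<forall>i. \<exists>W \<subseteq> Cset (a i) \<union> Sset (a i). card W = nu (a i) Q \<and> vertex_cover (a i) Q W"
    using ex_vertex_cover_card_nu by blast
  then obtain V where "\<forall>i. V i \<subseteq> Cset (a i) \<union> Sset (a i) \<and> card (V i) = nu (a i) Q
      \<and> vertex_cover (a i) Q (V i)"
    by metis
  then have V: "\<And>i. V i \<subseteq> Cset (a i) \<union> Sset (a i)" "\<And>i. card (V i) = nu (a i) Q"
    "\<And>i. vertex_cover (a i) Q (V i)"
    by auto
  define P where "P = Q \<union> (\<Union>i\<in>{1..m}. row_pairs i (V i))"
  have "finite Q" using Q by (rule finite_subset) (simp add: finite_pairs Cset_def Sset_def)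
  moreover have "finite (V i)" "Rv i' \<notin> V i" for i i'
    using V(1)[of i] finite_subset by (auto simp: Cset_def Sset_def)
  ultimately have "card P = card Q + (\<Sum>i=1..m. nu (a i) Q)"
    unfolding P_def using Q Rv_notin_pairs V(2) by (subst card_Un_row_pairs) auto
  moreover have "P \<inter> pairs (Cset ?n) (Sset ?n) = Q"
    unfolding P_def row_pairs_def using Q Rv_notin_pairs by blast
  moreover have "is_2cover (HY_vertices m a) (HY_edges m a) P"
    unfolding P_def using young Q V(1,3) by (rule is_2cover_HY)
  moreover have "finite (HY_vertices m a)" by (simp add: HY_vertices_def Rset_def Cset_def Sset_def)
  ultimately show ?thesis using tau2_le_card by blast
qed

end
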